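(* Let $d\ge 2$ and $r,t$ be positive integers, let $\mathcal{S}$ be a finite collection of spheres in $\mathbb{R}^d$, and let $\mathcal{N}\subseteq\mathcal{S}$ be a nested set of exactly $t(r+1)$ spheres. Suppose that the intersection graph $G(\mathcal{S}\setminus\mathcal{N})$ contains a collection $\mathcal{P}$ of $t^2(r+1)$ pairwise vertex-disjoint paths such that for each $P\in\mathcal{P}$: one end vertex of $P$ intersects the minimal sphere of $\mathcal{N}$, the other end vertex of $P$ intersects the maximal sphere of $\mathcal{N}$, and $P$ has length (number of edges) at most $r$. Then $G(\mathcal{S})$ contains $K_{t,t}$ as a subgraph.
   Context: A sphere in $\mathbb{R}^d$ is the boundary of a closed ball of positive radius; for a sphere $S$, $B(S)$ is the closed ball with boundary $S$. For a collection $\mathcal{X}$ of spheres, $G(\mathcal{X})$ is the graph with vertex set $\mathcal{X}$ in which two spheres are adjacent iff they intersect. A sphere $S'$ contains a different sphere $S$ if $B(S)\subseteq B(S')$. A collection is nested if for any two of its spheres one contains the other. Within a nested collection, the minimal (resp. maximal) sphere is the one containing no other (resp. contained in no other) sphere of the collection. Subgraphs need not be induced. *)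

theory Defs
  imports "HOL-Analysis.Analysis"
begin

definition is_sphere :: "'a::euclidean_space set \<Rightarrow> bool" where
  "is_sphere X \<longleftrightarrow> (\<exists>c r. r > 0 \<and> X = sphere c r)"

definition ball_of :: "'a::euclidean_space set \<Rightarrow> 'a set" where
  "ball_of X = (SOME B. \<exists>c r. r > 0 \<and> X = sphere c r \<and> B = cball c r)"

definition sphere_contains :: "'a::euclidean_space set \<Rightarrow> 'a set \<Rightarrow> bool" where
  "sphere_contains S' S \<longleftrightarrow> S \<noteq> S' \<and> ball_of S \<subseteq> ball_of S'"

definition nested :: "'a::euclidean_space set set \<Rightarrow> bool" where
  "nested N \<longleftrightarrow> (\<forall>S\<in>N. \<forall>S'\<in>N. S \<noteq> S' \<longrightarrow> sphere_contains S S' \<or> sphere_contains S' S)"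

definition minimal_in :: "'a::euclidean_space set \<Rightarrow> 'a set set \<Rightarrow> bool" where
  "minimal_in M N \<longleftrightarrow> M \<in> N \<and> (\<forall>S\<in>N. \<not> sphere_contains M S)"

definition maximal_in :: "'a::euclidean_space set \<Rightarrow> 'a set set \<Rightarrow> bool" where
  "maximal_in M N \<longleftrightarrow> M \<in> N \<and> (\<forall>S\<in>N. \<not> sphere_contains S M)"

definition adj :: "'a set \<Rightarrow> 'a set \<Rightarrow> bool" where
  "adj S S' \<longleftrightarrow> S \<noteq> S' \<and> S \<inter> S' \<noteq> {}"

text \<open>A path in G(X), given as the nonempty list of its (distinct) vertices in order.
Its length (number of edges) is length p - 1.\<close>
definition is_path_in :: "'a set set \<Rightarrow> 'a set list \<Rightarrow> bool" where
  "is_path_in X p \<longleftrightarrow> p \<noteq> [] \<and> distinct p \<and> set p \<subseteq> X \<and>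
     (\<forall>i. Suc i < length p \<longrightarrow> adj (p ! i) (p ! Suc i))"

definition contains_Ktt :: "'a set set \<Rightarrow> nat \<Rightarrow> bool" where
  "contains_Ktt X t \<longleftrightarrow> (\<exists>A B. A \<subseteq> X \<and> B \<subseteq> X \<and> A \<inter> B = {} \<and> card A = t \<and> card B = t \<and>
     (\<forall>a\<in>A. \<forall>b\<in>B. adj a b))"

end

theory Submission
  imports Defs
begin

text \<open>Enumerate the nested spheres as N_0, ..., N_{m-1} with increasing balls, m = t(r+1).
For d \<ge> 2 spheres are connected, so the union of the spheres of a path is connected; as it
touches the inside of every ball B(N_k) and a point on the outermost sphere, it meets every N_k.
By the same argument the indices of the N_k met by a single sphere form an interval. The at most
r+1 vertices of a path thus cover all m indices by intervals, so one vertex meets t consecutive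
spheres. There are only tr+1 windows of t consecutive indices, so t of the t^2(r+1) disjoint
paths share a window; one such vertex from each of them, together with the t spheres of the
window, spans K_{t,t}.\<close>

lemma pigeonhole_card_subset:
  assumes "f \<in> A \<rightarrow> B" "finite A" "finite B" "card B * (t - 1) < card A"
  obtains y J where "y \<in> B" "J \<subseteq> A" "card J = t" "\<And>a. a \<in> J \<Longrightarrow> f a = y"
proof -
  obtain a where "a \<in> A"
    using assms(4) by fastforce
  with assms(1) have "B \<noteq> {}"
    by blast
  then obtain y where y: "y \<in> B" and fibre: "card A \<le> card (f -` {y} \<inter> A) * card B"
    using pigeonhole_card[OF assms(1-3)] by blast
  have "card B * (t - 1) < card (f -` {y} \<inter> A) * card B"
    using assms(4) fibre by linarith
  then have "t - 1 < card (f -` {y} \<inter> A)"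
    by (simp add: mult.commute)
  then have "t \<le> card (f -` {y} \<inter> A)"
    by linarith
  then obtain J where "J \<subseteq> f -` {y} \<inter> A" "card J = t"
    by (rule obtain_subset_with_card_n)
  with y that show thesis
    by blast
qed

lemma convex_nat_set_contains_window:
  fixes H :: "nat set"
  assumes H: "H \<subseteq> {..<m}"
    and convex: "\<And>a b j. a \<in> H \<Longrightarrow> b \<in> H \<Longrightarrow> a \<le> j \<Longrightarrow> j \<le> b \<Longrightarrow> j \<in> H"
    and card: "t \<le> card H"
  shows "\<exists>k. k + t \<le> m \<and> {k..<k + t} \<subseteq> H"
proof (cases "H = {}")
  case True
  with card show ?thesis
    by auto
next
  case False
  have fin: "finite H"
    using H finite_subset by blast
  define a where "a = Min H"
  define b where "b = Max H"
  have ab: "a \<in> H" "b \<in> H" "H \<subseteq> {a..b}"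
    using fin False by (auto simp: a_def b_def)
  then have "t \<le> card {a..b}"
    using card card_mono[of "{a..b}" H] by simp
  moreover have "a \<le> b"
    using ab by auto
  ultimately have "a + t \<le> Suc b"
    by simp
  moreover have "b < m"
    using ab H by blast
  moreover have "{a..<a + t} \<subseteq> H"
    using convex[OF ab(1,2)] \<open>a + t \<le> Suc b\<close> by auto
  ultimately show ?thesis
    by (intro exI[of _ a]) simp
qed

lemma window_in_convex_cover:
  fixes I :: "'v \<Rightarrow> nat set"
  assumes V: "finite V"
    and cover: "{..<m} \<subseteq> (\<Union>v\<in>V. I v)"
    and convex: "\<And>v a b j. v \<in> V \<Longrightarrow> a \<in> I v \<Longrightarrow> b \<in> I v \<Longrightarrow> a \<le> j \<Longrightarrow> j \<le> b \<Longrightarrow> j \<in> I v"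
    and small: "card V * (t - 1) < m"
  shows "\<exists>v\<in>V. \<exists>k. k + t \<le> m \<and> {k..<k + t} \<subseteq> I v"
proof -
  define f where "f k = (SOME v. v \<in> V \<and> k \<in> I v)" for k
  have f: "f k \<in> V \<and> k \<in> I (f k)" if "k < m" for k
  proof -
    have "\<exists>v. v \<in> V \<and> k \<in> I v"
      using cover that by blast
    then show ?thesis
      unfolding f_def by (rule someI_ex)
  qed
  then have "f \<in> {..<m} \<rightarrow> V"
    by blast
  moreover have "card V * (t - 1) < card {..<m}"
    using small by simp
  ultimately obtain v J where v: "v \<in> V" and J: "J \<subseteq> {..<m}" "card J = t" "\<And>k. k \<in> J \<Longrightarrow> f k = v"
    by (rule pigeonhole_card_subset[OF _ finite_lessThan V]) blast
  have "J \<subseteq> I v \<inter> {..<m}"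
    using J f by fastforce
  then have card: "t \<le> card (I v \<inter> {..<m})"
    using J(2) card_mono[of "I v \<inter> {..<m}" J] by simp
  have "j \<in> I v \<inter> {..<m}"
    if "a \<in> I v \<inter> {..<m}" "b \<in> I v \<inter> {..<m}" "a \<le> j" "j \<le> b" for a b j
    using that convex[OF v, of a b j] by auto
  then have "\<exists>k. k + t \<le> m \<and> {k..<k + t} \<subseteq> I v \<inter> {..<m}"
    using card by (rule convex_nat_set_contains_window[OF Int_lower2])
  with v show ?thesis
    by blast
qed

lemma common_window:
  fixes W :: "nat \<Rightarrow> nat \<Rightarrow> bool"
  assumes "t \<le> m" "(m - t + 1) * (t - 1) < n"
    and window: "\<forall>i<n. \<exists>k. k + t \<le> m \<and> W i k"
  shows "\<exists>J k. J \<subseteq> {..<n} \<and> card J = t \<and> k + t \<le> m \<and> (\<forall>i\<in>J. W i k)"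
proof -
  define f where "f i = (SOME k. k + t \<le> m \<and> W i k)" for i
  have f: "f i + t \<le> m \<and> W i (f i)" if "i < n" for i
  proof -
    have "\<exists>k. k + t \<le> m \<and> W i k"
      using window that by blast
    then show ?thesis
      unfolding f_def by (rule someI_ex)
  qed
  then have "f \<in> {..<n} \<rightarrow> {..m - t}"
    by fastforce
  moreover have "card {..m - t} * (t - 1) < card {..<n}"
    using assms(2) by simp
  ultimately obtain k J where k: "k \<in> {..m - t}" and J: "J \<subseteq> {..<n}" "card J = t" "\<And>i. i \<in> J \<Longrightarrow> f i = k"
    by (rule pigeonhole_card_subset[OF _ finite_lessThan finite_atMost]) blast
  moreover have "k + t \<le> m"
    using k assms(1) by simp
  moreover have "W i k" if "i \<in> J" for i
    using f[of i] J that by auto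
  ultimately show ?thesis
    by blast
qed

lemma finite_enumeration_by_key:
  fixes \<rho> :: "'a \<Rightarrow> 'b::linorder"
  assumes "finite A" "inj_on \<rho> A"
  obtains e where "bij_betw e {..<card A} A" "\<And>k j. k < j \<Longrightarrow> j < card A \<Longrightarrow> \<rho> (e k) < \<rho> (e j)"
proof -
  obtain l where l: "sorted_wrt (<) l" "set l = \<rho> ` A" "length l = card (\<rho> ` A)"
    using finite_set_strict_sorted[OF finite_imageI[OF assms(1)]] .
  have len: "length l = card A"
    using l(3) card_image[OF assms(2)] by simp
  define e where "e = inv_into A \<rho> \<circ> (!) l"
  have "bij_betw ((!) l) {..<card A} (\<rho> ` A)"
    using l(1,2) len strict_sorted_iff by (intro bij_betw_nth) auto
  moreover have "bij_betw (inv_into A \<rho>) (\<rho> ` A) A"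
    using assms(2) by (intro bij_betw_inv_into) (simp add: inj_on_imp_bij_betw)
  ultimately have "bij_betw e {..<card A} A"
    unfolding e_def by (rule bij_betw_trans)
  moreover have key: "\<rho> (e k) = l ! k" if "k < card A" for k
  proof -
    have "l ! k \<in> \<rho> ` A"
      unfolding l(2)[symmetric] using len that by simp
    then show ?thesis
      by (simp add: e_def f_inv_into_f)
  qed
  moreover have "\<rho> (e k) < \<rho> (e j)" if "k < j" "j < card A" for k j
    using that key sorted_wrt_nth_less[OF l(1)] len by simp
  ultimately show thesis
    using that by blast
qed

lemma ball_of_sphere:
  assumes "is_sphere S"
  obtains c r where "r > 0" "S = sphere c r" "ball_of S = cball c r"
proof -
  have "\<exists>B c r. r > 0 \<and> S = sphere c r \<and> B = cball c r"
    using assms unfolding is_sphere_def by blast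
  then have "\<exists>c r. r > 0 \<and> S = sphere c r \<and> ball_of S = cball c r"
    unfolding ball_of_def by (rule someI_ex)
  with that show thesis
    by blast
qed

lemma
  assumes "is_sphere S"
  shows closed_ball_of: "closed (ball_of S)"
    and bounded_ball_of: "bounded (ball_of S)"
    and frontier_ball_of: "frontier (ball_of S) = S"
    and sphere_subset_ball_of: "S \<subseteq> ball_of S"
proof -
  obtain c r where "S = sphere c r" "ball_of S = cball c r"
    using ball_of_sphere[OF assms] .
  then show "closed (ball_of S)" "bounded (ball_of S)" "frontier (ball_of S) = S" "S \<subseteq> ball_of S"
    by auto
qed

lemma connected_is_sphere:
  fixes S :: "'a::euclidean_space set"
  assumes "DIM('a) \<ge> 2" "is_sphere S"
  shows "connected S"
proof -
  obtain c r where "S = sphere c r"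
    using ball_of_sphere[OF assms(2)] .
  then show ?thesis
    using connected_sphere[OF assms(1)] by simp
qed

lemma sphere_eq_if_ball_of_subset_diameter_eq:
  assumes "is_sphere S" "is_sphere S'" "ball_of S \<subseteq> ball_of S'"
    and "diameter (ball_of S) = diameter (ball_of S')"
  shows "S = S'"
proof -
  obtain c r where cr: "r > 0" "S = sphere c r" "ball_of S = cball c r"
    using ball_of_sphere[OF assms(1)] .
  obtain c' r' where cr': "r' > 0" "S' = sphere c' r'" "ball_of S' = cball c' r'"
    using ball_of_sphere[OF assms(2)] .
  have "r = r'"
    using assms(4) cr cr' by (simp add: diameter_cball)
  moreover have "dist c c' + r \<le> r'"
    using assms(3) cr cr' cball_subset_cball_iff[of c r c' r'] by auto
  ultimately show ?thesis
    using cr cr' by simp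
qed

lemma connected_meets_intermediate_sphere:
  assumes "is_sphere S_in" "is_sphere S" "is_sphere S_out"
    and "ball_of S_in \<subseteq> ball_of S" "ball_of S \<subseteq> ball_of S_out"
    and "connected C" "C \<inter> S_in \<noteq> {}" "C \<inter> S_out \<noteq> {}"
  shows "C \<inter> S \<noteq> {}"
proof -
  obtain y x where y: "y \<in> C" "y \<in> ball_of S" and x: "x \<in> C" "x \<in> S_out"
    using assms(4,7,8) sphere_subset_ball_of[OF assms(1)] by blast
  have "x \<notin> interior (ball_of S)"
    using x(2) interior_mono[OF assms(5)] frontier_ball_of[OF assms(3)] by (auto simp: frontier_def)
  show ?thesis
  proof (cases "x \<in> ball_of S")
    case True
    with \<open>x \<notin> interior (ball_of S)\<close> have "x \<in> frontier (ball_of S)"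
      using closed_ball_of[OF assms(2)] by (simp add: frontier_def)
    with x(1) show ?thesis
      using frontier_ball_of[OF assms(2)] by blast
  next
    case False
    then have "C \<inter> frontier (ball_of S) \<noteq> {}"
      using x y by (intro connected_Int_frontier[OF assms(6)]) blast+
    then show ?thesis
      using frontier_ball_of[OF assms(2)] by simp
  qed
qed

lemma connected_Union_chain:
  assumes "\<And>X. X \<in> set p \<Longrightarrow> connected X"
    and "\<And>i. Suc i < length p \<Longrightarrow> p ! i \<inter> p ! Suc i \<noteq> {}"
  shows "connected (\<Union>(set p))"
  using assms
proof (induction p)
  case Nil
  then show ?case
    by simp
next
  case (Cons X p)
  show ?case
  proof (cases "p = []")
    case True
    with Cons.prems(1) show ?thesis
      by simp
  next
    case False
    have "connected (\<Union>(set p))"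
      using Cons.prems by (intro Cons.IH) fastforce+
    moreover have "X \<inter> hd p \<noteq> {}"
      using Cons.prems(2)[of 0] False by (simp add: hd_conv_nth)
    then have "X \<inter> \<Union>(set p) \<noteq> {}"
      using False hd_in_set by blast
    moreover have "connected X"
      using Cons.prems(1) by simp
    ultimately show ?thesis
      by (simp add: connected_Un)
  qed
qed

lemma connected_Union_path:
  fixes X :: "'a::euclidean_space set set"
  assumes "DIM('a) \<ge> 2" "\<And>S. S \<in> X \<Longrightarrow> is_sphere S" "is_path_in X p"
  shows "connected (\<Union>(set p))"
proof (rule connected_Union_chain)
  show "connected S" if "S \<in> set p" for S
    using that assms connected_is_sphere unfolding is_path_in_def by blast
  show "p ! i \<inter> p ! Suc i \<noteq> {}" if "Suc i < length p" for i
    using that assms(3) unfolding is_path_in_def adj_def by blast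
qed

lemma nested_ball_of_linear:
  assumes "nested N" "S \<in> N" "S' \<in> N"
  shows "ball_of S \<subseteq> ball_of S' \<or> ball_of S' \<subseteq> ball_of S"
proof (cases "S = S'")
  case False
  with assms show ?thesis
    unfolding nested_def sphere_contains_def by blast
qed simp

lemma minimal_in_ball_of_subset:
  assumes "nested N" "minimal_in M N" "S \<in> N"
  shows "ball_of M \<subseteq> ball_of S"
proof (cases "S = M")
  case False
  have "M \<in> N" "\<not> sphere_contains M S"
    using assms(2,3) unfolding minimal_in_def by auto
  with False assms(1,3) have "sphere_contains S M"
    unfolding nested_def by blast
  then show ?thesis
    unfolding sphere_contains_def by blast
qed simp

lemma maximal_in_ball_of_subset:
  assumes "nested N" "maximal_in M N" "S \<in> N"
  shows "ball_of S \<subseteq> ball_of M"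
proof (cases "S = M")
  case False
  have "M \<in> N" "\<not> sphere_contains S M"
    using assms(2,3) unfolding maximal_in_def by auto
  with False assms(1,3) have "sphere_contains M S"
    unfolding nested_def by blast
  then show ?thesis
    unfolding sphere_contains_def by blast
qed simp

lemma nested_enumeration:
  fixes N :: "'a::euclidean_space set set"
  assumes "finite N" "nested N" "\<forall>S\<in>N. is_sphere S"
  obtains e where "bij_betw e {..<card N} N"
    "\<And>k j. k \<le> j \<Longrightarrow> j < card N \<Longrightarrow> ball_of (e k) \<subseteq> ball_of (e j)"
proof -
  \<comment> \<open>Along the chain, the diameter of the ball is an injective key that reflects inclusion.\<close>
  define \<rho> :: "'a set \<Rightarrow> real" where "\<rho> S = diameter (ball_of S)" for S
  have \<rho>_mono: "\<rho> S \<le> \<rho> S'" if "S' \<in> N" "ball_of S \<subseteq> ball_of S'" for S S'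
    unfolding \<rho>_def using that diameter_subset bounded_ball_of assms(3) by blast
  have "inj_on \<rho> N"
  proof (rule inj_onI)
    fix S S' assume S: "S \<in> N" "S' \<in> N" "\<rho> S = \<rho> S'"
    then show "S = S'"
      using nested_ball_of_linear[OF assms(2) S(1,2)] assms(3)
        sphere_eq_if_ball_of_subset_diameter_eq[of S S'] sphere_eq_if_ball_of_subset_diameter_eq[of S' S]
      unfolding \<rho>_def by fastforce
  qed
  then obtain e where e: "bij_betw e {..<card N} N"
    and e_less: "\<And>k j. k < j \<Longrightarrow> j < card N \<Longrightarrow> \<rho> (e k) < \<rho> (e j)"
    using finite_enumeration_by_key[OF assms(1)] by blast
  have "ball_of (e k) \<subseteq> ball_of (e j)" if "k \<le> j" "j < card N" for k j
  proof (cases "k = j")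
    case False
    have "e k \<in> N" "e j \<in> N"
      using e that bij_betwE by fastforce+
    moreover have "\<not> \<rho> (e j) \<le> \<rho> (e k)"
      using e_less False that by (simp add: not_le)
    ultimately show ?thesis
      using nested_ball_of_linear[OF assms(2)] \<rho>_mono by blast
  qed simp
  with e that show thesis
    by blast
qed

lemma path_meets_intermediate_sphere:
  fixes X :: "'a::euclidean_space set set"
  assumes "DIM('a) \<ge> 2" "\<And>S. S \<in> X \<Longrightarrow> is_sphere S" "is_path_in X p"
    and "is_sphere S_in" "is_sphere S" "is_sphere S_out"
    and "ball_of S_in \<subseteq> ball_of S" "ball_of S \<subseteq> ball_of S_out"
    and "hd p \<inter> S_in \<noteq> {}" "last p \<inter> S_out \<noteq> {}"
  shows "\<exists>v\<in>set p. v \<inter> S \<noteq> {}"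
proof -
  have "p \<noteq> []"
    using assms(3) unfolding is_path_in_def by simp
  then have "\<Union>(set p) \<inter> S_in \<noteq> {}" "\<Union>(set p) \<inter> S_out \<noteq> {}"
    using assms(9,10) hd_in_set last_in_set by blast+
  then have "\<Union>(set p) \<inter> S \<noteq> {}"
    using connected_meets_intermediate_sphere[OF assms(4-8) connected_Union_path[OF assms(1-3)]] by blast
  then show ?thesis
    by blast
qed

lemma path_meets_consecutive_spheres:
  fixes X :: "'a::euclidean_space set set" and e :: "nat \<Rightarrow> 'a set"
  assumes dim: "DIM('a) \<ge> 2" and X: "\<And>S. S \<in> X \<Longrightarrow> is_sphere S" and p: "is_path_in X p"
    and e: "\<And>k. k < m \<Longrightarrow> is_sphere (e k)"
    and e_mono: "\<And>k j. k \<le> j \<Longrightarrow> j < m \<Longrightarrow> ball_of (e k) \<subseteq> ball_of (e j)"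
    and S_in: "is_sphere S_in" "\<And>k. k < m \<Longrightarrow> ball_of S_in \<subseteq> ball_of (e k)" "hd p \<inter> S_in \<noteq> {}"
    and S_out: "is_sphere S_out" "\<And>k. k < m \<Longrightarrow> ball_of (e k) \<subseteq> ball_of S_out" "last p \<inter> S_out \<noteq> {}"
    and short: "length p * (t - 1) < m"
  shows "\<exists>k. k + t \<le> m \<and> (\<exists>v\<in>set p. \<forall>j\<in>{k..<k + t}. v \<inter> e j \<noteq> {})"
proof -
  define I where "I v = {k. k < m \<and> v \<inter> e k \<noteq> {}}" for v
  have "\<exists>v\<in>set p. \<exists>k. k + t \<le> m \<and> {k..<k + t} \<subseteq> I v"
  proof (rule window_in_convex_cover)
    show "{..<m} \<subseteq> (\<Union>v\<in>set p. I v)"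
    proof
      fix k assume "k \<in> {..<m}"
      then have "k < m"
        by simp
      then have "\<exists>v\<in>set p. v \<inter> e k \<noteq> {}"
        by (intro path_meets_intermediate_sphere[OF dim X p S_in(1) e S_out(1) S_in(2) S_out(2) S_in(3) S_out(3)])
      with \<open>k < m\<close> show "k \<in> (\<Union>v\<in>set p. I v)"
        unfolding I_def by blast
    qed
    show "j \<in> I v" if "v \<in> set p" "a \<in> I v" "b \<in> I v" "a \<le> j" "j \<le> b" for v a b j
    proof -
      have "a < m" "j < m" "v \<inter> e a \<noteq> {}" "v \<inter> e b \<noteq> {}" "connected v"
        using that p X connected_is_sphere[OF dim] unfolding I_def is_path_in_def by auto
      then show ?thesis
        using connected_meets_intermediate_sphere[OF e e e e_mono e_mono] that(3-5) unfolding I_def by auto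
    qed
    have "card (set p) * (t - 1) \<le> length p * (t - 1)"
      by (intro mult_le_mono1 card_length)
    with short show "card (set p) * (t - 1) < m"
      by linarith
  qed simp
  then obtain v k where "v \<in> set p" "k + t \<le> m" "{k..<k + t} \<subseteq> I v"
    by blast
  then show ?thesis
    unfolding I_def by blast
qed

lemma contains_Ktt_by_representatives:
  fixes V :: "'i \<Rightarrow> 'a set set"
  assumes "card J = t" "card B = t" "B \<subseteq> Y" "Y \<subseteq> X"
    and "\<And>i. i \<in> J \<Longrightarrow> V i \<subseteq> X - Y"
    and "\<And>i i'. i \<in> J \<Longrightarrow> i' \<in> J \<Longrightarrow> i \<noteq> i' \<Longrightarrow> V i \<inter> V i' = {}"
    and "\<And>i. i \<in> J \<Longrightarrow> \<exists>v\<in>V i. \<forall>b\<in>B. v \<inter> b \<noteq> {}"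
  shows "contains_Ktt X t"
proof -
  define g where "g i = (SOME v. v \<in> V i \<and> (\<forall>b\<in>B. v \<inter> b \<noteq> {}))" for i
  have g: "g i \<in> V i \<and> (\<forall>b\<in>B. g i \<inter> b \<noteq> {})" if "i \<in> J" for i
  proof -
    have "\<exists>v. v \<in> V i \<and> (\<forall>b\<in>B. v \<inter> b \<noteq> {})"
      using assms(7)[OF that] by blast
    then show ?thesis
      unfolding g_def by (rule someI_ex)
  qed
  have "inj_on g J"
  proof (rule inj_onI)
    fix i i' assume i: "i \<in> J" "i' \<in> J" and "g i = g i'"
    then have "g i \<in> V i \<inter> V i'"
      using g[OF i(1)] g[OF i(2)] by simp
    then show "i = i'"
      using assms(6)[OF i] by blast
  qed
  then have card_A: "card (g ` J) = t"
    using assms(1) by (simp add: card_image)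
  have A: "g ` J \<subseteq> X - Y"
    using g assms(5) by blast
  have adj: "adj a b" if a: "a \<in> g ` J" and b: "b \<in> B" for a b
  proof -
    obtain i where "i \<in> J" "a = g i"
      using a by blast
    then have "a \<inter> b \<noteq> {}"
      using g[of i] b by simp
    moreover have "a \<noteq> b"
      using A assms(3) a b by blast
    ultimately show ?thesis
      unfolding adj_def by simp
  qed
  show ?thesis
    unfolding contains_Ktt_def
  proof (rule exI[of _ "g ` J"], rule exI[of _ B], intro conjI ballI)
    show "g ` J \<subseteq> X" "B \<subseteq> X" "g ` J \<inter> B = {}"
      using A assms(3,4) by blast+
  qed (use card_A assms(2) adj in auto)
qed

lemma mult_pred_less:
  fixes l r t :: nat
  assumes "l \<le> r + 1" "t > 0"
  shows "l * (t - 1) < t * (r + 1)"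
proof -
  have "l * (t - 1) \<le> (r + 1) * (t - 1)"
    using assms(1) by (rule mult_le_mono1)
  also have "\<dots> < (r + 1) * t"
    using assms(2) by (intro mult_strict_left_mono) simp_all
  finally show ?thesis
    by (simp add: mult.commute)
qed

lemma window_start_count:
  fixes r t :: nat
  assumes "t > 0"
  shows "(t * (r + 1) - t + 1) * (t - 1) < t\<^sup>2 * (r + 1)"
proof -
  have "(t * (r + 1) - t + 1) * (t - 1) = (t * r + 1) * (t - 1)"
    by (simp add: algebra_simps)
  also have "\<dots> < (t * r + 1) * t"
    using assms by (intro mult_strict_left_mono) simp_all
  also have "\<dots> \<le> t\<^sup>2 * (r + 1)"
    by (simp add: algebra_simps power2_eq_square)
  finally show ?thesis .
qed

theorem lemma4p1:
  fixes SS NN :: "'a::euclidean_space set set"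
    and r t :: nat
    and P :: "nat \<Rightarrow> 'a set list"
    and Nmin Nmax :: "'a set"
  assumes "DIM('a) \<ge> 2"
    and "r > 0" and "t > 0"
    and "finite SS" and "\<forall>X\<in>SS. is_sphere X"
    and "NN \<subseteq> SS" and "nested NN" and "card NN = t * (r + 1)"
    and "minimal_in Nmin NN" and "maximal_in Nmax NN"
    and "\<forall>i < t^2 * (r + 1). is_path_in (SS - NN) (P i)"
    and "\<forall>i < t^2 * (r + 1). \<forall>j < t^2 * (r + 1). i \<noteq> j \<longrightarrow> set (P i) \<inter> set (P j) = {}"
    and "\<forall>i < t^2 * (r + 1). hd (P i) \<inter> Nmin \<noteq> {} \<and> last (P i) \<inter> Nmax \<noteq> {}"
    and "\<forall>i < t^2 * (r + 1). length (P i) - 1 \<le> r"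
  shows "contains_Ktt SS t"
proof -
  let ?m = "t * (r + 1)" and ?n = "t^2 * (r + 1)"
  have spheres: "\<forall>S\<in>NN. is_sphere S" "\<And>S. S \<in> SS - NN \<Longrightarrow> is_sphere S" "\<And>S. S \<in> NN \<Longrightarrow> is_sphere S"
    using assms(5,6) by blast+
  have ends: "Nmin \<in> NN" "Nmax \<in> NN"
    using assms(9,10) unfolding minimal_in_def maximal_in_def by blast+
  obtain e where e: "bij_betw e {..<?m} NN"
    and e_mono: "\<And>k j. k \<le> j \<Longrightarrow> j < ?m \<Longrightarrow> ball_of (e k) \<subseteq> ball_of (e j)"
    by (rule nested_enumeration[OF finite_subset[OF assms(6,4)] assms(7) spheres(1), unfolded assms(8)]) (rule that)
  have eN: "e k \<in> NN" if "k < ?m" for k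
    using e that bij_betwE by blast
  have "\<forall>i<?n. \<exists>k. k + t \<le> ?m \<and> (\<exists>v\<in>set (P i). \<forall>j\<in>{k..<k + t}. v \<inter> e j \<noteq> {})"
  proof (intro allI impI)
    fix i assume i: "i < ?n"
    show "\<exists>k. k + t \<le> ?m \<and> (\<exists>v\<in>set (P i). \<forall>j\<in>{k..<k + t}. v \<inter> e j \<noteq> {})"
    proof (rule path_meets_consecutive_spheres[where X = "SS - NN", OF assms(1) spheres(2) _
          spheres(3)[OF eN] e_mono spheres(3)[OF ends(1)] _ _ spheres(3)[OF ends(2)]])
      show "ball_of Nmin \<subseteq> ball_of (e k)" "ball_of (e k) \<subseteq> ball_of Nmax" if "k < ?m" for k
        using minimal_in_ball_of_subset[OF assms(7,9)] maximal_in_ball_of_subset[OF assms(7,10)] eN[OF that]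
        by blast+
      show "length (P i) * (t - 1) < ?m"
        using assms(3,14) i by (intro mult_pred_less) auto
    qed (use assms(11,13) i in blast)+
  qed
  from common_window[OF _ window_start_count[OF assms(3)] this]
  obtain J k where J: "J \<subseteq> {..<?n}" "card J = t" "k + t \<le> ?m"
    and window: "\<forall>i\<in>J. \<exists>v\<in>set (P i). \<forall>j\<in>{k..<k + t}. v \<inter> e j \<noteq> {}"
    by auto
  show ?thesis
  proof (rule contains_Ktt_by_representatives[where V = "\<lambda>i. set (P i)" and B = "e ` {k..<k + t}" and Y = NN])
    show "card (e ` {k..<k + t}) = t"
      using J(3) inj_on_subset[OF bij_betw_imp_inj_on[OF e]] by (simp add: card_image subset_eq)
    show "set (P i) \<inter> set (P i') = {}" if "i \<in> J" "i' \<in> J" "i \<noteq> i'" for i i'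
      using assms(12) J(1) that by blast
  qed (use J window eN assms(6,11) in \<open>auto simp: is_path_in_def\<close>)
qed

end
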